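(* Let $n>d$, let $\mathcal{M}=(M_\sigma)$ be a linkage $(n,d)$-matching field on $L\sqcup R$ and fix $\ell_j\in L$. Then the set $\{\Omega_\rho^{(j)} : \rho\in\binom{L}{n-d+1},\ \ell_j\in\rho\}$, where $\Omega^{(j)}_\rho$ denotes the restriction (induced subgraph) of the Chow covector $\Omega_\rho$ to $(L\setminus\{\ell_j\})\sqcup R$, is the set of Chow covectors of the induced submatching field $(M_\sigma)_{\sigma\subseteq L\setminus\{\ell_j\}}$ on $(L\setminus\{\ell_j\})\sqcup R$.
   Context: $L=\{\ell_1,\dots,\ell_n\}$, $R=\{r_1,\dots,r_d\}$; graphs bipartite, identified with edge sets. A matching field on $L'\sqcup R$ ($|L'|\ge d$) assigns to each $d$-subset $\sigma\subseteq L'$ a perfect matching $M_\sigma$ between $\sigma$ and $R$; it is linkage if for every $r_i\in R$ and every $(d+1)$-subset $\tau\subseteq L'$ there exist distinct $\ell,\ell'\in\tau$ with $M_{\tau\setminus\{\ell\}}$ and $M_{\tau\setminus\{\ell'\}}$ agreeing except on edges incident with $r_i$. For a matching field on $L'\sqcup R$ and a $(|L'|-d+1)$-subset $\rho\subseteq L'$, the Chow covector $\Omega_\rho$ is the graph with edges $(\ell,r)$ for $\ell\in\rho$, where $r$ is matched to $\ell$ in $M_{(L'\setminus\rho)\cup\{\ell\}}$. *)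

theory Defs
  imports Main
begin

type_synonym ('a, 'b) bgraph = "('a \<times> 'b) set"

definition perfect_matching :: "('a, 'b) bgraph \<Rightarrow> 'a set \<Rightarrow> 'b set \<Rightarrow> bool" where
  "perfect_matching G S R \<longleftrightarrow> G \<subseteq> S \<times> R \<and>
     (\<forall>l\<in>S. \<exists>!r. (l, r) \<in> G) \<and> (\<forall>r\<in>R. \<exists>!l. (l, r) \<in> G)"

text \<open>A matching field on L' and R (with d = card R): each d-subset of L'
  is assigned a perfect matching with R. Values on other sets are irrelevant.\<close>
definition matching_field :: "('a set \<Rightarrow> ('a, 'b) bgraph) \<Rightarrow> 'a set \<Rightarrow> 'b set \<Rightarrow> bool" where
  "matching_field M L' R \<longleftrightarrow> card R \<le> card L' \<and>
     (\<forall>\<sigma>. \<sigma> \<subseteq> L' \<and> card \<sigma> = card R \<longrightarrow> perfect_matching (M \<sigma>) \<sigma> R)"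

definition linkage :: "('a set \<Rightarrow> ('a, 'b) bgraph) \<Rightarrow> 'a set \<Rightarrow> 'b set \<Rightarrow> bool" where
  "linkage M L' R \<longleftrightarrow> matching_field M L' R \<and>
     (\<forall>r\<in>R. \<forall>\<tau>. \<tau> \<subseteq> L' \<and> card \<tau> = card R + 1 \<longrightarrow>
        (\<exists>l\<in>\<tau>. \<exists>l'\<in>\<tau>. l \<noteq> l' \<and>
           {e \<in> M (\<tau> - {l}). snd e \<noteq> r} = {e \<in> M (\<tau> - {l'}). snd e \<noteq> r}))"

definition chow_covector :: "('a set \<Rightarrow> ('a, 'b) bgraph) \<Rightarrow> 'a set \<Rightarrow> 'a set \<Rightarrow> ('a, 'b) bgraph" where
  "chow_covector M L' \<rho> = {(l, r). l \<in> \<rho> \<and> (l, r) \<in> M ((L' - \<rho>) \<union> {l})}"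

definition chow_covectors :: "('a set \<Rightarrow> ('a, 'b) bgraph) \<Rightarrow> 'a set \<Rightarrow> 'b set \<Rightarrow> ('a, 'b) bgraph set" where
  "chow_covectors M L' R = {chow_covector M L' \<rho> | \<rho>. \<rho> \<subseteq> L' \<and> card \<rho> = card L' - card R + 1}"

definition delete_left :: "('a, 'b) bgraph \<Rightarrow> 'a \<Rightarrow> ('a, 'b) bgraph" where
  "delete_left G lj = {e \<in> G. fst e \<noteq> lj}"

end

theory Submission
  imports Defs
begin

text \<open>Both \<open>\<Omega>\<^sub>\<rho>\<close> with \<open>lj\<close> deleted and the Chow covector of the submatching field
  indexed by \<open>\<rho> - {lj}\<close> read their edges off the matchings of the same sets
  \<open>(L - \<rho>) \<union> {l}\<close>, and \<open>\<rho> \<mapsto> \<rho> - {lj}\<close> is a bijection from the \<open>(n-d+1)\<close>-subsets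
  of \<open>L\<close> containing \<open>lj\<close> onto the \<open>(n-d)\<close>-subsets of \<open>L - {lj}\<close>.\<close>

lemma delete_left_chow_covector:
  assumes "lj \<in> \<rho>" "\<rho> \<subseteq> L"
  shows "delete_left (chow_covector M L \<rho>) lj = chow_covector M (L - {lj}) (\<rho> - {lj})"
proof -
  have "L - {lj} - (\<rho> - {lj}) = L - \<rho>"
    using assms by blast
  then show ?thesis
    unfolding delete_left_def chow_covector_def by (simp only:) fastforce
qed

lemma subsets_containing_eq_image_insert:
  assumes "finite L" "lj \<in> L"
  shows "{\<rho>. \<rho> \<subseteq> L \<and> card \<rho> = Suc k \<and> lj \<in> \<rho>}
         = insert lj ` {\<rho>'. \<rho>' \<subseteq> L - {lj} \<and> card \<rho>' = k}"
proof (intro set_eqI iffI)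
  fix \<rho> assume "\<rho> \<in> {\<rho>. \<rho> \<subseteq> L \<and> card \<rho> = Suc k \<and> lj \<in> \<rho>}"
  then have "\<rho> = insert lj (\<rho> - {lj})" "\<rho> - {lj} \<subseteq> L - {lj}" "card (\<rho> - {lj}) = k"
    using finite_subset[OF _ assms(1)] by auto
  then show "\<rho> \<in> insert lj ` {\<rho>'. \<rho>' \<subseteq> L - {lj} \<and> card \<rho>' = k}"
    by blast
next
  fix \<rho> assume "\<rho> \<in> insert lj ` {\<rho>'. \<rho>' \<subseteq> L - {lj} \<and> card \<rho>' = k}"
  then obtain \<rho>' where "\<rho> = insert lj \<rho>'" "\<rho>' \<subseteq> L - {lj}" "card \<rho>' = k"
    by blast
  moreover have "finite \<rho>'" "lj \<notin> \<rho>'"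
    using \<open>\<rho>' \<subseteq> L - {lj}\<close> assms(1) finite_subset by blast+
  ultimately show "\<rho> \<in> {\<rho>. \<rho> \<subseteq> L \<and> card \<rho> = Suc k \<and> lj \<in> \<rho>}"
    using assms(2) by auto
qed

theorem lemma3p26:
  fixes M :: "'a set \<Rightarrow> ('a \<times> 'b) set" and L :: "'a set" and R :: "'b set"
    and n d :: nat and lj :: 'a
  assumes "finite L" and "finite R"
    and "card L = n" and "card R = d" and "n > d"
    and "linkage M L R"
    and "lj \<in> L"
  shows "{delete_left (chow_covector M L \<rho>) lj | \<rho>. \<rho> \<subseteq> L \<and> card \<rho> = n - d + 1 \<and> lj \<in> \<rho>}
         = chow_covectors M (L - {lj}) R"
proof -
  let ?\<Omega>' = "chow_covector M (L - {lj})"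
  have size: "card (L - {lj}) - card R + 1 = n - d"
    using assms by simp
  have "{delete_left (chow_covector M L \<rho>) lj | \<rho>. \<rho> \<subseteq> L \<and> card \<rho> = n - d + 1 \<and> lj \<in> \<rho>}
        = (\<lambda>\<rho>. ?\<Omega>' (\<rho> - {lj})) ` {\<rho>. \<rho> \<subseteq> L \<and> card \<rho> = Suc (n - d) \<and> lj \<in> \<rho>}"
    unfolding setcompr_eq_image Suc_eq_plus1
    by (intro image_cong refl) (simp add: delete_left_chow_covector)
  also have "\<dots> = ?\<Omega>' ` {\<rho>'. \<rho>' \<subseteq> L - {lj} \<and> card \<rho>' = n - d}"
    unfolding subsets_containing_eq_image_insert[OF assms(1,7)] image_image
    by (intro image_cong refl) (simp add: subset_Diff_insert)
  also have "\<dots> = chow_covectors M (L - {lj}) R"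
    unfolding chow_covectors_def size setcompr_eq_image ..
  finally show ?thesis .
qed

end
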